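(* Let $q$ be a prime power and let $\alpha$ be a primitive element of $GF(q^2)$, so that every element $x\in GF(q^2)$ can be written uniquely as $x=a+b\alpha$ with $a,b\in GF(q)$. (i) For each $c\in GF(q)^*$ let $S_c=\{x\in GF(q^2)^*: x=a+c\alpha \text{ for some } a\in GF(q)\}$. Then the family $\{S_c\}_{c\in GF(q)^*}$ is a $(q^2-1,q-1,q,q-1,0)$-DPDF and a $(q^2-1,q-1,q,(q-1)(q-2),q^2-q)$-EPDF in the multiplicative group $GF(q^2)^*$. (ii) For each $c\in GF(q)^*$ let $S'_c=\{i: \alpha^i\in S_c,\ 0\le i\le q^2-2\}\subseteq \mathbb{Z}_{q^2-1}$. Then the family $\{S'_c\}_{c\in GF(q)^*}$ is a $(q^2-1,q-1,q,q-1,0)$-DPDF and a $(q^2-1,q-1,q,(q-1)(q-2),q^2-q)$-EPDF in the additive group $\mathbb{Z}_{q^2-1}$.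
   Context: Let $G$ be a finite group with identity $e$, written multiplicatively (in an additive group such as $\mathbb{Z}_v$ read $xy^{-1}$ as $x-y$ and $e$ as $0$); $G^*=G\setminus\{e\}$. For $D_1,D_2\subseteq G$, $\Delta(D_1,D_2)$ is the multiset $\{xy^{-1}: x\in D_1, y\in D_2\}$, and for $D\subseteq G$, $\Delta(D)$ is the multiset $\{xy^{-1}: x,y\in D, x\neq y\}$. For a family $A=\{A_1,\dots,A_s\}$ of pairwise disjoint subsets of $G$, ${\rm Int}(A)$ is the multiset union of the $\Delta(A_i)$, and ${\rm Ext}(A)$ is the multiset union of $\Delta(A_i,A_j)$ over all ordered pairs $i\neq j$. If $|G|=v$, a $(v,s,k,\lambda,\mu)$-disjoint partial difference family (DPDF) is a family of $s$ pairwise disjoint $k$-subsets $A_1,\dots,A_s$ of $G^*$ such that, with $S=\bigcup_i A_i$, the multiset ${\rm Int}(A)$ contains each element of $S$ exactly $\lambda$ times and each element of $G\setminus(S\cup\{e\})$ exactly $\mu$ times. A $(v,s,k,\lambda,\mu)$-external partial difference family (EPDF) is defined identically with ${\rm Ext}(A)$ in place of ${\rm Int}(A)$. *)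

theory Defs
  imports "HOL-Algebra.Elementary_Groups" "HOL-Library.Multiset" "HOL-Computational_Algebra.Primes"
begin

definition Delta2 :: "('a, 'b) monoid_scheme \<Rightarrow> 'a set \<Rightarrow> 'a set \<Rightarrow> 'a multiset" where
  "Delta2 G D1 D2 = image_mset (\<lambda>(x, y). x \<otimes>\<^bsub>G\<^esub> inv\<^bsub>G\<^esub> y) (mset_set (D1 \<times> D2))"

definition Delta1 :: "('a, 'b) monoid_scheme \<Rightarrow> 'a set \<Rightarrow> 'a multiset" where
  "Delta1 G D = image_mset (\<lambda>(x, y). x \<otimes>\<^bsub>G\<^esub> inv\<^bsub>G\<^esub> y) (mset_set {(x, y). x \<in> D \<and> y \<in> D \<and> x \<noteq> y})"

definition Int_fam :: "('a, 'b) monoid_scheme \<Rightarrow> 'i set \<Rightarrow> ('i \<Rightarrow> 'a set) \<Rightarrow> 'a multiset" where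
  "Int_fam G I A = (\<Sum>i\<in>I. Delta1 G (A i))"

definition Ext_fam :: "('a, 'b) monoid_scheme \<Rightarrow> 'i set \<Rightarrow> ('i \<Rightarrow> 'a set) \<Rightarrow> 'a multiset" where
  "Ext_fam G I A = (\<Sum>(i, j)\<in>{(i, j). i \<in> I \<and> j \<in> I \<and> i \<noteq> j}. Delta2 G (A i) (A j))"

definition disjoint_family_params ::
  "('a, 'b) monoid_scheme \<Rightarrow> nat \<Rightarrow> nat \<Rightarrow> nat \<Rightarrow> 'i set \<Rightarrow> ('i \<Rightarrow> 'a set) \<Rightarrow> bool" where
  "disjoint_family_params G v s k I A \<longleftrightarrow>
     group G \<and> finite (carrier G) \<and> card (carrier G) = v \<and>
     finite I \<and> card I = s \<and>
     (\<forall>i\<in>I. A i \<subseteq> carrier G - {\<one>\<^bsub>G\<^esub>} \<and> card (A i) = k) \<and>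
     (\<forall>i\<in>I. \<forall>j\<in>I. i \<noteq> j \<longrightarrow> A i \<inter> A j = {})"

definition DPDF ::
  "('a, 'b) monoid_scheme \<Rightarrow> nat \<Rightarrow> nat \<Rightarrow> nat \<Rightarrow> nat \<Rightarrow> nat \<Rightarrow> 'i set \<Rightarrow> ('i \<Rightarrow> 'a set) \<Rightarrow> bool" where
  "DPDF G v s k lam mu I A \<longleftrightarrow>
     disjoint_family_params G v s k I A \<and>
     (\<forall>x\<in>carrier G - {\<one>\<^bsub>G\<^esub>}.
        count (Int_fam G I A) x = (if x \<in> (\<Union>i\<in>I. A i) then lam else mu))"

definition EPDF ::
  "('a, 'b) monoid_scheme \<Rightarrow> nat \<Rightarrow> nat \<Rightarrow> nat \<Rightarrow> nat \<Rightarrow> nat \<Rightarrow> 'i set \<Rightarrow> ('i \<Rightarrow> 'a set) \<Rightarrow> bool" where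
  "EPDF G v s k lam mu I A \<longleftrightarrow>
     disjoint_family_params G v s k I A \<and>
     (\<forall>x\<in>carrier G - {\<one>\<^bsub>G\<^esub>}.
        count (Ext_fam G I A) x = (if x \<in> (\<Union>i\<in>I. A i) then lam else mu))"

definition mult_group_field :: "'a::field monoid" where
  "mult_group_field = \<lparr>carrier = UNIV - {0}, monoid.mult = (*), one = 1\<rparr>"

definition is_subfield :: "'a::field set \<Rightarrow> bool" where
  "is_subfield K \<longleftrightarrow> 0 \<in> K \<and> 1 \<in> K \<and>
     (\<forall>x\<in>K. \<forall>y\<in>K. x + y \<in> K \<and> x - y \<in> K \<and> x * y \<in> K) \<and>
     (\<forall>x\<in>K. x \<noteq> 0 \<longrightarrow> inverse x \<in> K)"

definition primitive_element :: "'a::field \<Rightarrow> bool" where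
  "primitive_element \<alpha> \<longleftrightarrow> \<alpha> \<noteq> 0 \<and> (\<forall>x. x \<noteq> 0 \<longrightarrow> (\<exists>n::nat. x = \<alpha> ^ n))"

definition prime_power :: "nat \<Rightarrow> bool" where
  "prime_power q \<longleftrightarrow> (\<exists>p m. prime p \<and> m \<ge> 1 \<and> q = p ^ m)"

definition S_set :: "'a::field set \<Rightarrow> 'a \<Rightarrow> 'a \<Rightarrow> 'a set" where
  "S_set K \<alpha> c = {x. x \<noteq> 0 \<and> (\<exists>a\<in>K. x = a + c * \<alpha>)}"

definition S'_set :: "nat \<Rightarrow> 'a::field set \<Rightarrow> 'a \<Rightarrow> 'a \<Rightarrow> int set" where
  "S'_set q K \<alpha> c = {i::int. 0 \<le> i \<and> i \<le> int (q ^ 2 - 2) \<and> \<alpha> ^ nat i \<in> S_set K \<alpha> c}"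

end

theory Submission
  imports Defs "HOL-Algebra.FiniteProduct"
begin

(* Write y = a + b*alpha with a, b in K and let beta(y) = b; beta is K-linear and S_c is the
  fibre of beta over c.  The difference z (z <> 0, 1) arises from S_c x S_d once for every y with
  beta(y) = d and beta(z*y) = c.  If z is in K, then beta(z*y) = z*beta(y): z never arises inside a
  block, and it arises q times from each of the q - 1 pairs (S_(z*d), S_d).  If z is not in K, then
  y |-> (beta(y), beta(z*y)) is an injective K-linear map from GF(q^2) to K^2, hence a bijection,
  so z arises exactly once from every ordered pair of blocks.  Part (ii) is part (i) pulled back
  along the isomorphism i |-> alpha^i from Z_(q^2-1) onto GF(q^2)^*. *)

section \<open>Counting differences\<close>

lemma card_fiber_bij:
  assumes "bij_betw f A B" "b \<in> B"
  shows "card {x \<in> A. f x = b} = 1"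
proof -
  obtain a where "a \<in> A" "f a = b"
    using assms by (auto simp: bij_betw_def)
  then have "{x \<in> A. f x = b} = {a}"
    using assms(1) by (auto simp: bij_betw_def inj_on_def)
  then show ?thesis by simp
qed

lemma card_off_diagonal:
  assumes "finite A"
  shows "card {(i, j). i \<in> A \<and> j \<in> A \<and> i \<noteq> j} = card A * (card A - 1)"
proof -
  have "{(i, j). i \<in> A \<and> j \<in> A \<and> i \<noteq> j} = Sigma A (\<lambda>i. A - {i})" by auto
  then show ?thesis
    using assms by (simp add: card_SigmaI card_Diff_singleton)
qed

lemma count_image_mset_mset_set:
  assumes "finite A"
  shows "count (image_mset f (mset_set A)) z = card {a \<in> A. f a = z}"
proof -
  have "count (image_mset f (mset_set A)) z = (\<Sum>a\<in>f -` {z} \<inter> A. 1)"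
    unfolding count_image_mset using assms by (intro sum.cong) auto
  also have "f -` {z} \<inter> A = {a \<in> A. f a = z}" by blast
  finally show ?thesis by simp
qed

lemma count_Delta2:
  assumes "finite D1" "finite D2"
  shows "count (Delta2 G D1 D2) z = card {(x, y) \<in> D1 \<times> D2. x \<otimes>\<^bsub>G\<^esub> inv\<^bsub>G\<^esub> y = z}"
  unfolding Delta2_def count_image_mset_mset_set[OF finite_cartesian_product[OF assms]]
  by (intro arg_cong[where f = card]) auto

lemma count_Delta1_eq_count_Delta2:
  assumes "group G" "finite D" "D \<subseteq> carrier G" "z \<noteq> \<one>\<^bsub>G\<^esub>"
  shows "count (Delta1 G D) z = count (Delta2 G D D) z"
proof -
  have fin: "finite {(x, y). x \<in> D \<and> y \<in> D \<and> x \<noteq> y}"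
    by (rule finite_subset[of _ "D \<times> D"]) (use assms(2) in auto)
  have "x \<otimes>\<^bsub>G\<^esub> inv\<^bsub>G\<^esub> x \<noteq> z" if "x \<in> D" for x
    using that assms group.r_inv[OF assms(1)] by auto
  then show ?thesis
    unfolding count_Delta2[OF assms(2) assms(2)] Delta1_def count_image_mset_mset_set[OF fin]
    by (intro arg_cong[where f = card]) auto
qed

lemma count_Int_fam:
  assumes "group G" "\<And>i. i \<in> I \<Longrightarrow> finite (A i) \<and> A i \<subseteq> carrier G" "z \<noteq> \<one>\<^bsub>G\<^esub>"
  shows "count (Int_fam G I A) z = (\<Sum>i\<in>I. count (Delta2 G (A i) (A i)) z)"
  unfolding Int_fam_def count_sum using assms
  by (intro sum.cong) (auto intro: count_Delta1_eq_count_Delta2)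

lemma count_Ext_fam:
  "count (Ext_fam G I A) z
     = (\<Sum>(i, j)\<in>{(i, j). i \<in> I \<and> j \<in> I \<and> i \<noteq> j}. count (Delta2 G (A i) (A j)) z)"
  unfolding Ext_fam_def count_sum by (intro sum.cong) auto

section \<open>Pulling difference families back along group isomorphisms\<close>

locale group_iso = group_hom +
  assumes iso: "h \<in> iso G H"
begin

lemma inj_on_carrier: "inj_on h (carrier G)"
  using iso by (simp add: iso_def bij_betw_def)

lemma image_carrier: "h ` carrier G = carrier H"
  using iso by (simp add: iso_def bij_betw_def)

lemma image_preimage: "B \<subseteq> carrier H \<Longrightarrow> h ` {x \<in> carrier G. h x \<in> B} = B"
  using image_carrier by (auto simp: subset_iff image_iff)

lemma image_diff_one: "x \<in> carrier G - {\<one>} \<Longrightarrow> h x \<in> carrier H - {\<one>\<^bsub>H\<^esub>}"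
  using inj_on_carrier hom_one G.one_closed by (auto simp: inj_on_eq_iff[symmetric] simp del: hom_one)

lemma count_Delta2_image:
  assumes "D1 \<subseteq> carrier G" "D2 \<subseteq> carrier G" "finite D1" "finite D2" "x \<in> carrier G"
  shows "count (Delta2 H (h ` D1) (h ` D2)) (h x) = count (Delta2 G D1 D2) x"
proof -
  have inj: "inj_on (map_prod h h) (D1 \<times> D2)"
    using inj_on_carrier assms(1,2) by (auto intro: map_prod_inj_on inj_on_subset)
  have "a \<otimes> inv b = x \<longleftrightarrow> h a \<otimes>\<^bsub>H\<^esub> inv\<^bsub>H\<^esub> h b = h x"
    if "a \<in> carrier G" "b \<in> carrier G" for a b
  proof -
    have "h (a \<otimes> inv b) = h a \<otimes>\<^bsub>H\<^esub> inv\<^bsub>H\<^esub> h b"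
      using that by simp
    then show ?thesis
      using that assms(5) inj_on_carrier by (simp add: inj_on_eq_iff[symmetric])
  qed
  then have "{(a, b) \<in> h ` D1 \<times> h ` D2. a \<otimes>\<^bsub>H\<^esub> inv\<^bsub>H\<^esub> b = h x}
      = map_prod h h ` {(a, b) \<in> D1 \<times> D2. a \<otimes> inv b = x}"
    using assms(1,2) by (auto simp: subset_iff intro!: image_eqI)
  moreover have "card (map_prod h h ` {(a, b) \<in> D1 \<times> D2. a \<otimes> inv b = x})
      = card {(a, b) \<in> D1 \<times> D2. a \<otimes> inv b = x}"
    by (rule card_image, rule inj_on_subset[OF inj]) auto
  ultimately show ?thesis
    using assms by (simp add: count_Delta2)
qed

context
  fixes I :: "'i set" and A :: "'i \<Rightarrow> 'a set" and B :: "'i \<Rightarrow> 'c set"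
  assumes A_carrier: "\<And>i. i \<in> I \<Longrightarrow> A i \<subseteq> carrier G"
    and B_image: "\<And>i. i \<in> I \<Longrightarrow> B i = h ` A i"
begin

lemma disjoint_family_params_pullback:
  assumes "disjoint_family_params H v s k I B"
  shows "disjoint_family_params G v s k I A"
proof -
  have inj_A: "inj_on h (A i)" if "i \<in> I" for i
    using inj_on_subset[OF inj_on_carrier A_carrier[OF that]] .
  have bij: "bij_betw h (carrier G) (carrier H)"
    using iso by (simp add: iso_def)
  have "\<one> \<notin> A i" if "i \<in> I" for i
    using assms that B_image[OF that] by (force simp: disjoint_family_params_def)
  moreover have "card (A i) = card (B i)" if "i \<in> I" for i
    using B_image[OF that] card_image[OF inj_A[OF that]] by simp
  moreover have "A i \<inter> A j = {}" if "i \<in> I" "j \<in> I" "i \<noteq> j" for i j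
  proof -
    have "B i \<inter> B j = {}"
      using assms that by (auto simp: disjoint_family_params_def)
    then show ?thesis
      using B_image that by blast
  qed
  ultimately show ?thesis
    using assms A_carrier bij_betw_finite[OF bij] bij_betw_same_card[OF bij] G.group_axioms
    by (auto simp: disjoint_family_params_def subset_iff)
qed

lemma mem_UN_pullback:
  assumes "x \<in> carrier G"
  shows "h x \<in> (\<Union>i\<in>I. B i) \<longleftrightarrow> x \<in> (\<Union>i\<in>I. A i)"
  using assms A_carrier B_image inj_on_image_mem_iff[OF inj_on_carrier] by auto

context
  assumes finite_carrier: "finite (carrier G)"
begin

lemma count_Int_fam_pullback:
  assumes "x \<in> carrier G - {\<one>}"
  shows "count (Int_fam H I B) (h x) = count (Int_fam G I A) x"
proof -
  have fin: "finite (A i)" if "i \<in> I" for i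
    using finite_subset[OF A_carrier[OF that] finite_carrier] .
  have "count (Int_fam H I B) (h x) = (\<Sum>i\<in>I. count (Delta2 H (B i) (B i)) (h x))"
    using image_diff_one[OF assms] A_carrier fin B_image
    by (intro count_Int_fam) (auto simp flip: image_carrier)
  also have "\<dots> = (\<Sum>i\<in>I. count (Delta2 G (A i) (A i)) x)"
    using assms A_carrier fin B_image by (intro sum.cong) (auto simp: count_Delta2_image)
  also have "\<dots> = count (Int_fam G I A) x"
    using assms A_carrier fin by (intro count_Int_fam[symmetric]) auto
  finally show ?thesis .
qed

lemma count_Ext_fam_pullback:
  assumes "x \<in> carrier G"
  shows "count (Ext_fam H I B) (h x) = count (Ext_fam G I A) x"
  unfolding count_Ext_fam
  using assms A_carrier B_image finite_subset[OF A_carrier finite_carrier]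
  by (intro sum.cong) (auto simp: count_Delta2_image)

end

lemma DPDF_pullback:
  assumes "DPDF H v s k l m I B"
  shows "DPDF G v s k l m I A"
proof -
  have params: "disjoint_family_params G v s k I A"
    using assms disjoint_family_params_pullback by (simp add: DPDF_def)
  have "count (Int_fam G I A) x = (if x \<in> (\<Union>i\<in>I. A i) then l else m)"
    if x: "x \<in> carrier G - {\<one>}" for x
  proof -
    have "finite (carrier G)" using params by (simp add: disjoint_family_params_def)
    then have "count (Int_fam G I A) x = count (Int_fam H I B) (h x)"
      using count_Int_fam_pullback x by simp
    then show ?thesis
      using assms image_diff_one[OF x] mem_UN_pullback x by (simp add: DPDF_def)
  qed
  with params show ?thesis by (simp add: DPDF_def)
qed

lemma EPDF_pullback:
  assumes "EPDF H v s k l m I B"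
  shows "EPDF G v s k l m I A"
proof -
  have params: "disjoint_family_params G v s k I A"
    using assms disjoint_family_params_pullback by (simp add: EPDF_def)
  have "count (Ext_fam G I A) x = (if x \<in> (\<Union>i\<in>I. A i) then l else m)"
    if x: "x \<in> carrier G - {\<one>}" for x
  proof -
    have "finite (carrier G)" using params by (simp add: disjoint_family_params_def)
    then have "count (Ext_fam G I A) x = count (Ext_fam H I B) (h x)"
      using count_Ext_fam_pullback x by simp
    then show ?thesis
      using assms image_diff_one[OF x] mem_UN_pullback x by (simp add: EPDF_def)
  qed
  with params show ?thesis by (simp add: EPDF_def)
qed

end

end

lemma group_isoI: "group G \<Longrightarrow> group H \<Longrightarrow> h \<in> iso G H \<Longrightarrow> group_iso G H h"
  by (simp add: group_iso_def group_iso_axioms_def group_hom_def group_hom_axioms_def iso_iff)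

section \<open>The multiplicative group of a field\<close>

lemma comm_group_mult_group_field: "comm_group (mult_group_field :: 'a::field monoid)"
proof (rule comm_groupI)
  fix x :: 'a
  assume "x \<in> carrier mult_group_field"
  then show "\<exists>y\<in>carrier mult_group_field. y \<otimes>\<^bsub>mult_group_field\<^esub> x = \<one>\<^bsub>mult_group_field\<^esub>"
    by (intro bexI[of _ "inverse x"]) (auto simp: mult_group_field_def)
qed (auto simp: mult_group_field_def mult.assoc mult.commute)

lemma group_mult_group_field: "group (mult_group_field :: 'a::field monoid)"
  using comm_group_mult_group_field by (rule comm_group.axioms)

lemma carrier_mult_group_field [simp]: "carrier (mult_group_field :: 'a::field monoid) = UNIV - {0}"
  by (simp add: mult_group_field_def)

lemma mult_mult_group_field [simp]: "x \<otimes>\<^bsub>mult_group_field\<^esub> y = (x * y :: 'a::field)"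
  by (simp add: mult_group_field_def)

lemma one_mult_group_field [simp]: "\<one>\<^bsub>mult_group_field\<^esub> = (1 :: 'a::field)"
  by (simp add: mult_group_field_def)

lemma inv_mult_group_field [simp]: "(y :: 'a::field) \<noteq> 0 \<Longrightarrow> inv\<^bsub>mult_group_field\<^esub> y = inverse y"
  by (rule group.inv_equality[OF group_mult_group_field]) auto

lemma pow_mult_group_field [simp]: "x [^]\<^bsub>mult_group_field\<^esub> (n :: nat) = (x :: 'a::field) ^ n"
  by (induction n) auto

lemma count_Delta2_mult_group_field:
  fixes C D :: "'a::field set"
  assumes "finite C" "finite D" "0 \<notin> D"
  shows "count (Delta2 mult_group_field C D) z = card {y \<in> D. z * y \<in> C}"
proof -
  have quotient_iff: "x \<otimes>\<^bsub>mult_group_field\<^esub> inv\<^bsub>mult_group_field\<^esub> y = z \<longleftrightarrow> x = z * y"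
    if "y \<in> D" for x y
  proof -
    have "y \<noteq> 0" using that assms(3) by auto
    then show ?thesis by (auto simp: field_simps)
  qed
  have "{(x, y) \<in> C \<times> D. x \<otimes>\<^bsub>mult_group_field\<^esub> inv\<^bsub>mult_group_field\<^esub> y = z}
      = (\<lambda>y. (z * y, y)) ` {y \<in> D. z * y \<in> C}"
  proof (intro equalityI subsetI)
    fix p
    assume "p \<in> {(x, y) \<in> C \<times> D. x \<otimes>\<^bsub>mult_group_field\<^esub> inv\<^bsub>mult_group_field\<^esub> y = z}"
    then obtain x y where "p = (x, y)" "x \<in> C" "y \<in> D"
      and "x \<otimes>\<^bsub>mult_group_field\<^esub> inv\<^bsub>mult_group_field\<^esub> y = z"
      by blast
    then show "p \<in> (\<lambda>y. (z * y, y)) ` {y \<in> D. z * y \<in> C}"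
      using quotient_iff by auto
  next
    fix p
    assume "p \<in> (\<lambda>y. (z * y, y)) ` {y \<in> D. z * y \<in> C}"
    then obtain y where "p = (z * y, y)" "y \<in> D" "z * y \<in> C"
      by blast
    then show "p \<in> {(x, y) \<in> C \<times> D. x \<otimes>\<^bsub>mult_group_field\<^esub> inv\<^bsub>mult_group_field\<^esub> y = z}"
      using quotient_iff[of y "z * y"] by (simp del: mult_mult_group_field)
  qed
  moreover have "inj (\<lambda>y. (z * y, y))"
    by (simp add: inj_def)
  ultimately show ?thesis
    using assms by (simp add: count_Delta2 card_image inj_on_subset)
qed

lemma power_card_minus_one:
  fixes x :: "'a::{field,finite}"
  assumes "x \<noteq> 0"
  shows "x ^ (card (UNIV :: 'a set) - 1) = 1"
proof -
  have "card (carrier (mult_group_field :: 'a monoid)) = card (UNIV :: 'a set) - 1"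
    by (simp add: card_Diff_singleton)
  then show ?thesis
    using comm_group.power_order_eq_one[OF comm_group_mult_group_field, of x] assms by simp
qed

lemma power_mod_card_minus_one:
  fixes x :: "'a::{field,finite}"
  assumes "x \<noteq> 0"
  shows "x ^ (m mod (card (UNIV :: 'a set) - 1)) = x ^ m"
proof -
  let ?n = "card (UNIV :: 'a set) - 1"
  have "x ^ m = x ^ (?n * (m div ?n) + m mod ?n)"
    by simp
  also have "\<dots> = (x ^ ?n) ^ (m div ?n) * x ^ (m mod ?n)"
    by (simp only: power_add power_mult)
  also have "\<dots> = x ^ (m mod ?n)"
    using power_card_minus_one[OF assms] by simp
  finally show ?thesis ..
qed

lemma primitive_element_power_iso:
  fixes \<alpha> :: "'a::{field,finite}"
  assumes "primitive_element \<alpha>"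
  shows "(\<lambda>i. \<alpha> ^ nat i) \<in> iso (integer_mod_group (card (UNIV :: 'a set) - 1)) mult_group_field"
proof -
  let ?n = "card (UNIV :: 'a set) - 1"
  let ?h = "\<lambda>i. \<alpha> ^ nat i"
  have "card {0, 1 :: 'a} \<le> card (UNIV :: 'a set)"
    by (rule card_mono) auto
  then have n_pos: "?n \<noteq> 0" by simp
  then have carrier: "carrier (integer_mod_group ?n) = {0..<int ?n}"
    by (simp add: carrier_integer_mod_group)
  have \<alpha>: "\<alpha> \<noteq> 0"
    using assms by (simp add: primitive_element_def)
  have surj: "?h ` {0..<int ?n} = UNIV - {0}"
  proof
    show "?h ` {0..<int ?n} \<subseteq> UNIV - {0}"
      using \<alpha> by auto
    show "UNIV - {0} \<subseteq> ?h ` {0..<int ?n}"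
    proof
      fix y :: 'a
      assume "y \<in> UNIV - {0}"
      then obtain m :: nat where "y = \<alpha> ^ m"
        using assms by (auto simp: primitive_element_def)
      then have "y = ?h (int (m mod ?n))"
        using power_mod_card_minus_one[OF \<alpha>] by simp
      moreover have "m mod ?n < ?n"
        using n_pos by simp
      then have "int (m mod ?n) \<in> {0..<int ?n}"
        by (simp only: atLeastLessThan_iff of_nat_less_iff) simp
      ultimately show "y \<in> ?h ` {0..<int ?n}" by blast
    qed
  qed
  then have "inj_on ?h {0..<int ?n}"
    by (intro eq_card_imp_inj_on) (simp_all add: card_Diff_singleton)
  then have bij: "bij_betw ?h (carrier (integer_mod_group ?n)) (carrier mult_group_field)"
    using surj carrier by (simp add: bij_betw_def)
  have hom: "?h ((x + y) mod int ?n) = ?h x * ?h y" if "x \<ge> 0" "y \<ge> 0" for x y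
  proof -
    have "nat ((x + y) mod int ?n) = (nat x + nat y) mod ?n"
      using that by (simp add: nat_mod_distrib nat_add_distrib)
    then show ?thesis
      using power_mod_card_minus_one[OF \<alpha>] by (simp add: power_add)
  qed
  show ?thesis
    using bij hom carrier \<alpha> by (auto simp: iso_def hom_def)
qed

section \<open>Quadratic extensions of finite fields\<close>

lemma subfield_card_ge_2:
  fixes K :: "'a::field set"
  assumes "is_subfield K" "finite K"
  shows "card K \<ge> 2"
  using assms card_mono[of K "{0, 1}"] by (simp add: is_subfield_def)

lemma primitive_element_notin_subfield:
  fixes K :: "'a::field set"
  assumes "is_subfield K" "K \<noteq> UNIV" "primitive_element \<alpha>"
  shows "\<alpha> \<notin> K"
proof
  assume "\<alpha> \<in> K"
  then have "\<alpha> ^ n \<in> K" for n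
    using assms(1) by (induction n) (simp_all add: is_subfield_def)
  then have "x \<in> K" for x
    using assms(1,3) by (cases "x = 0") (auto simp: is_subfield_def primitive_element_def)
  with assms(2) show False by blast
qed

locale quadratic_extension =
  fixes K :: "'a::{field,finite} set" and \<alpha> :: 'a
  assumes subfield: "is_subfield K"
    and card_UNIV: "card (UNIV :: 'a set) = card K ^ 2"
    and alpha_notin: "\<alpha> \<notin> K"
begin

lemma zero_in [simp]: "0 \<in> K" and one_in: "1 \<in> K"
  using subfield by (simp_all add: is_subfield_def)

lemma diff_in: "x \<in> K \<Longrightarrow> y \<in> K \<Longrightarrow> x - y \<in> K"
  and mult_in: "x \<in> K \<Longrightarrow> y \<in> K \<Longrightarrow> x * y \<in> K"
  using subfield by (simp_all add: is_subfield_def)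

lemma inverse_in: "x \<in> K \<Longrightarrow> inverse x \<in> K"
  using subfield by (cases "x = 0") (simp_all add: is_subfield_def)

lemma divide_in: "x \<in> K \<Longrightarrow> y \<in> K \<Longrightarrow> x / y \<in> K"
  by (simp add: divide_inverse mult_in inverse_in)

lemma basis_unique:
  assumes "a \<in> K" "b \<in> K" "a' \<in> K" "b' \<in> K" "a + b * \<alpha> = a' + b' * \<alpha>"
  shows "a = a' \<and> b = b'"
proof (cases "b = b'")
  case False
  then have "\<alpha> = (a' - a) / (b - b')"
    using assms(5) by (simp add: field_simps)
  then have "\<alpha> \<in> K"
    using assms(1-4) by (simp add: divide_in diff_in)
  with alpha_notin show ?thesis ..
qed (use assms in simp)

lemma basis_surj: "(\<lambda>(a, b). a + b * \<alpha>) ` (K \<times> K) = UNIV"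
proof (rule card_subset_eq)
  have "inj_on (\<lambda>(a, b). a + b * \<alpha>) (K \<times> K)"
    using basis_unique by (auto simp: inj_on_def)
  then show "card ((\<lambda>(a, b). a + b * \<alpha>) ` (K \<times> K)) = card (UNIV :: 'a set)"
    by (simp add: card_image card_cartesian_product card_UNIV power2_eq_square)
qed auto

definition alpha_coord :: "'a \<Rightarrow> 'a" where
  "alpha_coord y = (THE b. b \<in> K \<and> (\<exists>a\<in>K. y = a + b * \<alpha>))"

lemma alpha_coord_eq:
  assumes "a \<in> K" "b \<in> K"
  shows "alpha_coord (a + b * \<alpha>) = b"
  unfolding alpha_coord_def
  by (rule the_equality) (use assms basis_unique in blast)+

lemma alpha_coord_decomp: "alpha_coord y \<in> K \<and> (\<exists>a\<in>K. y = a + alpha_coord y * \<alpha>)"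
proof -
  have "y \<in> (\<lambda>(a, b). a + b * \<alpha>) ` (K \<times> K)"
    using basis_surj by simp
  then obtain a b where "a \<in> K" "b \<in> K" "y = a + b * \<alpha>"
    by auto
  then show ?thesis
    by (auto simp: alpha_coord_eq)
qed

lemma alpha_coord_in: "alpha_coord y \<in> K"
  using alpha_coord_decomp by blast

lemma alpha_coord_eq_0_iff: "alpha_coord y = 0 \<longleftrightarrow> y \<in> K"
  using alpha_coord_decomp[of y] alpha_coord_eq[of y 0] by auto

lemma alpha_coord_diff: "alpha_coord (x - y) = alpha_coord x - alpha_coord y"
proof -
  obtain a b where "a \<in> K" "x = a + alpha_coord x * \<alpha>" "b \<in> K" "y = b + alpha_coord y * \<alpha>"
    using alpha_coord_decomp by metis
  then have "x - y = (a - b) + (alpha_coord x - alpha_coord y) * \<alpha>"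
    by (simp add: algebra_simps)
  then show ?thesis
    by (simp add: alpha_coord_eq diff_in alpha_coord_in \<open>a \<in> K\<close> \<open>b \<in> K\<close>)
qed

lemma alpha_coord_scale:
  assumes "t \<in> K"
  shows "alpha_coord (t * y) = t * alpha_coord y"
proof -
  obtain a where "a \<in> K" and y: "y = a + alpha_coord y * \<alpha>"
    using alpha_coord_decomp by blast
  have "t * y = t * (a + alpha_coord y * \<alpha>)"
    using y by (rule arg_cong)
  also have "\<dots> = t * a + (t * alpha_coord y) * \<alpha>"
    by (simp add: algebra_simps)
  finally show ?thesis
    using assms \<open>a \<in> K\<close> by (simp add: alpha_coord_eq mult_in alpha_coord_in)
qed

lemma S_set_eq_alpha_coord:
  assumes "c \<in> K - {0}"
  shows "S_set K \<alpha> c = {y. alpha_coord y = c}"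
proof -
  have "y \<noteq> 0" if "alpha_coord y = c" for y
    using that assms alpha_coord_eq_0_iff by force
  then show ?thesis
    using assms alpha_coord_decomp by (auto simp: S_set_def alpha_coord_eq)
qed

lemma card_S_set:
  assumes "c \<in> K - {0}"
  shows "card (S_set K \<alpha> c) = card K"
proof -
  have "S_set K \<alpha> c = (\<lambda>a. a + c * \<alpha>) ` K"
    using assms alpha_coord_decomp by (auto simp: S_set_eq_alpha_coord alpha_coord_eq)
  then show ?thesis
    by (simp add: card_image)
qed

lemma UN_S_set: "(\<Union>c\<in>K - {0}. S_set K \<alpha> c) = UNIV - K"
  using alpha_coord_in alpha_coord_eq_0_iff by (auto simp: S_set_eq_alpha_coord)

lemma disjoint_family_params_S_set:
  "disjoint_family_params mult_group_field (card K ^ 2 - 1) (card K - 1) (card K) (K - {0}) (S_set K \<alpha>)"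
  unfolding disjoint_family_params_def
proof (intro conjI ballI impI)
  show "card (carrier (mult_group_field :: 'a monoid)) = card K ^ 2 - 1"
    using card_UNIV by (simp add: card_Diff_singleton)
  show "card (K - {0}) = card K - 1"
    by (simp add: card_Diff_singleton)
next
  fix c
  assume c: "c \<in> K - {0}"
  have "alpha_coord 0 = 0" "alpha_coord 1 = 0"
    using one_in by (simp_all add: alpha_coord_eq_0_iff)
  with c show "S_set K \<alpha> c \<subseteq> carrier mult_group_field - {\<one>\<^bsub>mult_group_field\<^esub>}"
    by (auto simp: S_set_eq_alpha_coord)
  show "card (S_set K \<alpha> c) = card K"
    using c by (rule card_S_set)
next
  fix c d
  assume "c \<in> K - {0}" "d \<in> K - {0}" "c \<noteq> d"
  then show "S_set K \<alpha> c \<inter> S_set K \<alpha> d = {}"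
    by (auto simp: S_set_eq_alpha_coord)
qed (simp_all add: group_mult_group_field)

lemma bij_alpha_coord_pair:
  assumes "z \<notin> K"
  shows "bij_betw (\<lambda>y. (alpha_coord y, alpha_coord (z * y))) UNIV (K \<times> K)"
proof -
  let ?f = "\<lambda>y. (alpha_coord y, alpha_coord (z * y))"
  have "inj ?f"
  proof (rule injI)
    fix x y
    assume "?f x = ?f y"
    then have "x - y \<in> K" "z * (x - y) \<in> K"
      by (simp_all add: alpha_coord_diff alpha_coord_eq_0_iff[symmetric] right_diff_distrib)
    show "x = y"
    proof (rule ccontr)
      assume "x \<noteq> y"
      then have "z = z * (x - y) / (x - y)" by simp
      with \<open>x - y \<in> K\<close> \<open>z * (x - y) \<in> K\<close> have "z \<in> K"
        by (metis divide_in)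
      with assms show False ..
    qed
  qed
  moreover have "range ?f = K \<times> K"
  proof (rule card_subset_eq)
    show "range ?f \<subseteq> K \<times> K"
      using alpha_coord_in by auto
    show "card (range ?f) = card (K \<times> K)"
      using \<open>inj ?f\<close> by (simp add: card_image card_UNIV card_cartesian_product power2_eq_square)
  qed simp
  ultimately show ?thesis
    by (simp add: bij_betw_def)
qed

lemma count_Delta2_S_set:
  assumes "c \<in> K - {0}" "d \<in> K - {0}"
  shows "count (Delta2 mult_group_field (S_set K \<alpha> c) (S_set K \<alpha> d)) z
    = card {y. alpha_coord y = d \<and> alpha_coord (z * y) = c}"
proof -
  have "0 \<notin> S_set K \<alpha> d"
    by (simp add: S_set_def)
  then have "count (Delta2 mult_group_field (S_set K \<alpha> c) (S_set K \<alpha> d)) z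
      = card {y \<in> S_set K \<alpha> d. z * y \<in> S_set K \<alpha> c}"
    by (intro count_Delta2_mult_group_field) auto
  also have "{y \<in> S_set K \<alpha> d. z * y \<in> S_set K \<alpha> c}
      = {y. alpha_coord y = d \<and> alpha_coord (z * y) = c}"
    using assms by (simp add: S_set_eq_alpha_coord)
  finally show ?thesis .
qed

lemma count_Delta2_S_set_notin:
  assumes "z \<notin> K" "c \<in> K - {0}" "d \<in> K - {0}"
  shows "count (Delta2 mult_group_field (S_set K \<alpha> c) (S_set K \<alpha> d)) z = 1"
  using card_fiber_bij[OF bij_alpha_coord_pair[OF assms(1)], of "(d, c)"] assms(2,3)
  by (simp add: count_Delta2_S_set)

lemma count_Delta2_S_set_in:
  assumes "z \<in> K" "c \<in> K - {0}" "d \<in> K - {0}"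
  shows "count (Delta2 mult_group_field (S_set K \<alpha> c) (S_set K \<alpha> d)) z
    = (if c = z * d then card K else 0)"
proof -
  have "{y. alpha_coord y = d \<and> alpha_coord (z * y) = c} = (if c = z * d then S_set K \<alpha> d else {})"
    using assms by (auto simp: alpha_coord_scale S_set_eq_alpha_coord)
  then show ?thesis
    using assms by (simp add: count_Delta2_S_set card_S_set)
qed

lemma count_Int_fam_S_set:
  assumes "z \<noteq> 0" "z \<noteq> 1"
  shows "count (Int_fam mult_group_field (K - {0}) (S_set K \<alpha>)) z = (if z \<in> K then 0 else card K - 1)"
proof -
  have "count (Int_fam mult_group_field (K - {0}) (S_set K \<alpha>)) z
      = (\<Sum>c\<in>K - {0}. count (Delta2 mult_group_field (S_set K \<alpha> c) (S_set K \<alpha> c)) z)"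
    using assms disjoint_family_params_S_set
    by (intro count_Int_fam) (auto simp: group_mult_group_field disjoint_family_params_def)
  also have "\<dots> = (\<Sum>c\<in>K - {0}. if z \<in> K then 0 else 1)"
    using assms by (intro sum.cong) (auto simp: count_Delta2_S_set_in count_Delta2_S_set_notin)
  finally show ?thesis
    by (simp add: card_Diff_singleton)
qed

lemma count_Ext_fam_S_set:
  assumes "z \<noteq> 0" "z \<noteq> 1"
  shows "count (Ext_fam mult_group_field (K - {0}) (S_set K \<alpha>)) z
    = (if z \<in> K then card K ^ 2 - card K else (card K - 1) * (card K - 2))"
proof -
  let ?T = "{(c, d). c \<in> K - {0} \<and> d \<in> K - {0} \<and> c \<noteq> d}"
  have "card ?T = card (K - {0}) * (card (K - {0}) - 1)"
    by (rule card_off_diagonal) simp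
  then have card_T: "card ?T = (card K - 1) * (card K - 2)"
    by (simp add: card_Diff_singleton numeral_2_eq_2)
  show ?thesis
  proof (cases "z \<in> K")
    case True
    have "count (Ext_fam mult_group_field (K - {0}) (S_set K \<alpha>)) z
        = (\<Sum>(c, d)\<in>?T. if c = z * d then card K else 0)"
      unfolding count_Ext_fam using True by (intro sum.cong) (auto simp: count_Delta2_S_set_in)
    also have "\<dots> = (\<Sum>p\<in>{p \<in> ?T. fst p = z * snd p}. card K)"
      using finite_subset[of ?T "K \<times> K"] by (subst sum.inter_filter) (auto simp: case_prod_beta)
    also have "\<dots> = card K * card {p \<in> ?T. fst p = z * snd p}"
      by simp
    also have "{p \<in> ?T. fst p = z * snd p} = (\<lambda>d. (z * d, d)) ` (K - {0})"
      using True assms by (auto simp: mult_in)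
    also have "card \<dots> = card K - 1"
      by (simp add: card_image inj_on_def card_Diff_singleton)
    finally show ?thesis
      using True by (simp add: power2_eq_square diff_mult_distrib2)
  next
    case False
    have "count (Ext_fam mult_group_field (K - {0}) (S_set K \<alpha>)) z = (\<Sum>(c, d)\<in>?T. 1)"
      unfolding count_Ext_fam using False by (intro sum.cong) (auto simp: count_Delta2_S_set_notin)
    then show ?thesis
      using False card_T by simp
  qed
qed

lemma DPDF_S_set:
  "DPDF mult_group_field (card K ^ 2 - 1) (card K - 1) (card K) (card K - 1) 0 (K - {0}) (S_set K \<alpha>)"
  unfolding DPDF_def using disjoint_family_params_S_set count_Int_fam_S_set UN_S_set by auto

lemma EPDF_S_set:
  "EPDF mult_group_field (card K ^ 2 - 1) (card K - 1) (card K)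
     ((card K - 1) * (card K - 2)) (card K ^ 2 - card K) (K - {0}) (S_set K \<alpha>)"
  unfolding EPDF_def using disjoint_family_params_S_set count_Ext_fam_S_set UN_S_set by auto

end

lemma S'_set_eq:
  assumes "2 \<le> q"
  shows "S'_set q K \<alpha> c = {i \<in> carrier (integer_mod_group (q ^ 2 - 1)). \<alpha> ^ nat i \<in> S_set K \<alpha> c}"
proof -
  have "4 \<le> q ^ 2"
    using power_mono[OF assms, of 2] by simp
  then show ?thesis
    by (auto simp: S'_set_def carrier_integer_mod_group)
qed

theorem mainTheorem1:
  fixes q :: nat and K :: "'a::{field,finite} set" and \<alpha> :: 'a
  assumes "prime_power q"
    and "card (UNIV :: 'a set) = q ^ 2"
    and "is_subfield K" and "card K = q"
    and "primitive_element \<alpha>"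
  shows "DPDF mult_group_field (q^2 - 1) (q - 1) q (q - 1) 0 (K - {0}) (S_set K \<alpha>)
       \<and> EPDF mult_group_field (q^2 - 1) (q - 1) q ((q - 1) * (q - 2)) (q^2 - q) (K - {0}) (S_set K \<alpha>)
       \<and> DPDF (integer_mod_group (q^2 - 1)) (q^2 - 1) (q - 1) q (q - 1) 0 (K - {0}) (S'_set q K \<alpha>)
       \<and> EPDF (integer_mod_group (q^2 - 1)) (q^2 - 1) (q - 1) q ((q - 1) * (q - 2)) (q^2 - q) (K - {0}) (S'_set q K \<alpha>)"
proof -
  have "2 \<le> q"
    using subfield_card_ge_2[OF assms(3)] assms(4) by simp
  then have "K \<noteq> UNIV"
    using assms(2,4) by (auto simp: power2_eq_square)
  then interpret quadratic_extension K \<alpha>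
    using assms primitive_element_notin_subfield by unfold_locales simp_all
  let ?h = "\<lambda>i. \<alpha> ^ nat i"
  interpret group_iso "integer_mod_group (q ^ 2 - 1)" mult_group_field ?h
    using primitive_element_power_iso[OF assms(5)] assms(2)
    by (intro group_isoI) (simp_all add: group_mult_group_field)
  have S'_carrier: "S'_set q K \<alpha> c \<subseteq> carrier (integer_mod_group (q ^ 2 - 1))" for c
    using S'_set_eq[OF \<open>2 \<le> q\<close>] by auto
  have S_image: "S_set K \<alpha> c = ?h ` S'_set q K \<alpha> c" for c
    unfolding S'_set_eq[OF \<open>2 \<le> q\<close>] by (rule image_preimage[symmetric]) (auto simp: S_set_def)
  note pullback = DPDF_pullback[where I = "K - {0}" and A = "S'_set q K \<alpha>" and B = "S_set K \<alpha>"]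
    EPDF_pullback[where I = "K - {0}" and A = "S'_set q K \<alpha>" and B = "S_set K \<alpha>"]
  show ?thesis
    using DPDF_S_set EPDF_S_set pullback S'_carrier S_image assms(4) by simp
qed

end
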